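(* Let $\pi,\sigma$ be formal Poisson deformations of $\pi_0,\sigma_0$, let $k\ge0$, $X_{(k)}\in\lambda\mathrm{Der}(\mathcal{B})[[\lambda]]$ and $\Phi_{(k)}=\exp(X_{(k)})$, and suppose that for all $a_1,a_2\in\mathcal{A}$, $\Phi_{(k)}^{-1}\sigma(\Phi_{(k)}\phi_0(a_1),\Phi_{(k)}\phi_0(a_2))=\phi_0(\pi(a_1,a_2))+\lambda^{k+1}R_{k+1}(a_1,a_2)+O(\lambda^{k+2})$ for a bilinear map $R_{k+1}:\mathcal{A}\times\mathcal{A}\to\mathcal{B}$. Then $R_{k+1}$ is a $2$-cocycle in $C^\bullet_{\mathrm{CE,der}}(\mathcal{A},\mathcal{B})$.
   Context: $\mathbb{K}$ is a field of characteristic zero. $\mathcal{A},\mathcal{B}$ are commutative $\mathbb{K}$-algebras with Poisson brackets $\pi_0=\{\cdot,\cdot\}_{\mathcal{A}}$, $\sigma_0=\{\cdot,\cdot\}_{\mathcal{B}}$, and $\phi_0:\mathcal{A}\to\mathcal{B}$ is a Poisson morphism (extended $\lambda$-linearly). A formal Poisson deformation of $\pi_0$ is a $\mathbb{K}[[\lambda]]$-bilinear Poisson bracket on $\mathcal{A}[[\lambda]]$ with zeroth-order term $\pi_0$. $\exp(X)=\sum_nX^n/n!$ for $X\in\lambda\mathrm{Der}(\mathcal{B})[[\lambda]]$. Chevalley–Eilenberg complex: $C^0_{\mathrm{CE}}(\mathcal{A},\mathcal{B})=\mathcal{B}$, $C^k_{\mathrm{CE}}$ = $k$-linear antisymmetric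 maps $\mathcal{A}^k\to\mathcal{B}$, $(\delta D)(a_0,\dots,a_k)=\sum_j(-1)^j\{\phi_0(a_j),D(\dots,\widehat{a_j},\dots)\}_{\mathcal{B}}+\sum_{i<j}(-1)^{i+j}D(\{a_i,a_j\}_{\mathcal{A}},\dots,\widehat{a_i},\dots,\widehat{a_j},\dots)$; $C^\bullet_{\mathrm{CE,der}}(\mathcal{A},\mathcal{B})$ is the subcomplex of cochains that are derivations along $\phi_0$ in each argument, i.e. $D(\dots,aa',\dots)=\phi_0(a)D(\dots,a',\dots)+D(\dots,a,\dots)\phi_0(a')$. *)

theory Defs
  imports Main "HOL-Computational_Algebra.Formal_Power_Series"
begin

definition kalgebra :: "('k::field \<Rightarrow> 'a::comm_ring_1 \<Rightarrow> 'a) \<Rightarrow> bool" where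
  "kalgebra sc \<longleftrightarrow> module sc \<and> (\<forall>c x y. sc c (x * y) = sc c x * y)"

definition bilinear_wrt ::
  "('s \<Rightarrow> 'x::ab_group_add \<Rightarrow> 'x) \<Rightarrow> ('s \<Rightarrow> 'y::ab_group_add \<Rightarrow> 'y) \<Rightarrow> ('x \<Rightarrow> 'x \<Rightarrow> 'y) \<Rightarrow> bool" where
  "bilinear_wrt scx scy B \<longleftrightarrow>
     (\<forall>x x' y. B (x + x') y = B x y + B x' y) \<and>
     (\<forall>x y y'. B x (y + y') = B x y + B x y') \<and>
     (\<forall>c x y. B (scx c x) y = scy c (B x y)) \<and>
     (\<forall>c x y. B x (scx c y) = scy c (B x y))"

definition poisson_bracket :: "('s \<Rightarrow> 'x::comm_ring \<Rightarrow> 'x) \<Rightarrow> ('x \<Rightarrow> 'x \<Rightarrow> 'x) \<Rightarrow> bool" where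
  "poisson_bracket sc P \<longleftrightarrow>
     bilinear_wrt sc sc P \<and>
     (\<forall>x y. P x y = - P y x) \<and>
     (\<forall>x y z. P x (P y z) + P y (P z x) + P z (P x y) = 0) \<and>
     (\<forall>x y z. P x (y * z) = P x y * z + y * P x z)"

definition fps_scale :: "('k \<Rightarrow> 'a \<Rightarrow> 'a::comm_monoid_add) \<Rightarrow> 'k fps \<Rightarrow> 'a fps \<Rightarrow> 'a fps" where
  "fps_scale sc c f = Abs_fps (\<lambda>n. \<Sum>i\<le>n. sc (fps_nth c i) (fps_nth f (n - i)))"

definition formal_poisson_deformation ::
  "('k::field \<Rightarrow> 'a::comm_ring_1 \<Rightarrow> 'a) \<Rightarrow> ('a \<Rightarrow> 'a \<Rightarrow> 'a) \<Rightarrow> ('a fps \<Rightarrow> 'a fps \<Rightarrow> 'a fps) \<Rightarrow> bool" where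
  "formal_poisson_deformation sc P0 P \<longleftrightarrow>
     poisson_bracket (fps_scale sc) P \<and>
     (\<forall>f g. fps_nth (P f g) 0 = P0 (fps_nth f 0) (fps_nth g 0))"

definition poisson_morphism ::
  "('k \<Rightarrow> 'a::comm_ring_1 \<Rightarrow> 'a) \<Rightarrow> ('k \<Rightarrow> 'b::comm_ring_1 \<Rightarrow> 'b) \<Rightarrow>
   ('a \<Rightarrow> 'a \<Rightarrow> 'a) \<Rightarrow> ('b \<Rightarrow> 'b \<Rightarrow> 'b) \<Rightarrow> ('a \<Rightarrow> 'b) \<Rightarrow> bool" where
  "poisson_morphism sa sb P Q \<phi> \<longleftrightarrow>
     (\<forall>x y. \<phi> (x + y) = \<phi> x + \<phi> y) \<and>
     (\<forall>c x. \<phi> (sa c x) = sb c (\<phi> x)) \<and>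
     (\<forall>x y. \<phi> (x * y) = \<phi> x * \<phi> y) \<and> \<phi> 1 = 1 \<and>
     (\<forall>x y. \<phi> (P x y) = Q (\<phi> x) (\<phi> y))"

definition fps_map_coeff :: "('a \<Rightarrow> 'b) \<Rightarrow> 'a fps \<Rightarrow> 'b fps" where
  "fps_map_coeff \<phi> f = Abs_fps (\<lambda>n. \<phi> (fps_nth f n))"

definition kderivation :: "('k \<Rightarrow> 'b::comm_ring_1 \<Rightarrow> 'b) \<Rightarrow> ('b \<Rightarrow> 'b) \<Rightarrow> bool" where
  "kderivation sb D \<longleftrightarrow>
     (\<forall>x y. D (x + y) = D x + D y) \<and> (\<forall>c x. D (sb c x) = sb c (D x)) \<and>
     (\<forall>x y. D (x * y) = D x * y + x * D y)"

text \<open>X = sum_n lambda^n X_n in lambda Der(B)[[lambda]]: X_0 = 0, all X_n derivations.\<close>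
definition lambda_der_series :: "('k \<Rightarrow> 'b::comm_ring_1 \<Rightarrow> 'b) \<Rightarrow> (nat \<Rightarrow> 'b \<Rightarrow> 'b) \<Rightarrow> bool" where
  "lambda_der_series sb X \<longleftrightarrow> X 0 = (\<lambda>x. 0) \<and> (\<forall>n. kderivation sb (X n))"

definition series_op :: "(nat \<Rightarrow> 'b \<Rightarrow> 'b::comm_monoid_add) \<Rightarrow> 'b fps \<Rightarrow> 'b fps" where
  "series_op X f = Abs_fps (\<lambda>n. \<Sum>i\<le>n. X i (fps_nth f (n - i)))"

text \<open>exp(X) = sum_m X^m / m!, computed coefficientwise: since X has no zeroth-order
term, X^m f is O(lambda^m), so only m \<le> n contributes to the coefficient of lambda^n.\<close>
definition fps_exp_op ::
  "('k::field_char_0 \<Rightarrow> 'b::comm_ring_1 \<Rightarrow> 'b) \<Rightarrow> (nat \<Rightarrow> 'b \<Rightarrow> 'b) \<Rightarrow> 'b fps \<Rightarrow> 'b fps" where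
  "fps_exp_op sb X f = Abs_fps (\<lambda>n. \<Sum>m\<le>n. sb (inverse (fact m)) (fps_nth ((series_op X ^^ m) f) n))"

definition CE_der_2cochain ::
  "('k \<Rightarrow> 'a::comm_ring_1 \<Rightarrow> 'a) \<Rightarrow> ('k \<Rightarrow> 'b::comm_ring_1 \<Rightarrow> 'b) \<Rightarrow> ('a \<Rightarrow> 'b) \<Rightarrow> ('a \<Rightarrow> 'a \<Rightarrow> 'b) \<Rightarrow> bool" where
  "CE_der_2cochain sa sb \<phi> D \<longleftrightarrow>
     bilinear_wrt sa sb D \<and>
     (\<forall>x y. D x y = - D y x) \<and>
     (\<forall>a a' y. D (a * a') y = \<phi> a * D a' y + D a y * \<phi> a') \<and>
     (\<forall>x a a'. D x (a * a') = \<phi> a * D x a' + D x a * \<phi> a')"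

definition CE_delta2 ::
  "('a \<Rightarrow> 'a \<Rightarrow> 'a) \<Rightarrow> ('b::ab_group_add \<Rightarrow> 'b \<Rightarrow> 'b) \<Rightarrow> ('a \<Rightarrow> 'b) \<Rightarrow> ('a \<Rightarrow> 'a \<Rightarrow> 'b) \<Rightarrow> 'a \<Rightarrow> 'a \<Rightarrow> 'a \<Rightarrow> 'b" where
  "CE_delta2 P Q \<phi> D a0 a1 a2 =
      Q (\<phi> a0) (D a1 a2) - Q (\<phi> a1) (D a0 a2) + Q (\<phi> a2) (D a0 a1)
    - D (P a0 a1) a2 + D (P a0 a2) a1 - D (P a1 a2) a0"

end

theory Submission
  imports Defs
begin

unbundle fps_syntax

text \<open>
  Let \<Phi> = exp X and let \<sigma>' u v be the preimage under \<Phi> of \<sigma> (\<Phi> u) (\<Phi> v). Since X is a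
  \<lambda>-series of derivations without constant term, \<Phi> is a \<lambda>-linear algebra automorphism of B[[\<lambda>]]
  that is the identity modulo higher order terms, so \<sigma>' is again a formal Poisson deformation of
  \<sigma>0. The hypothesis says that \<sigma>' (\<phi>0 a) (\<phi>0 b) agrees with \<phi>0 (\<pi> a b) below order K = k + 1 and
  exceeds it by R a b in order K. Antisymmetry and the Leibniz rule of \<sigma>' and \<pi> in order K make R
  an antisymmetric biderivation along \<phi>0. In order K of the Jacobi identity of \<sigma>' for \<phi>0 a0,
  \<phi>0 a1, \<phi>0 a2, everything cancels against the \<phi>0-image of the Jacobi identity of \<pi>, except the
  terms in which R occurs once, paired with a zeroth-order bracket; these add up to the
  coboundary of R.
\<close>

section \<open>Operators on formal power series\<close>

lemma fps_map_coeff_nth [simp]: "fps_map_coeff g f $ n = g (f $ n)"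
  by (simp add: fps_map_coeff_def)

lemma fps_mult_nth_cong:
  assumes "\<And>i. i \<le> n \<Longrightarrow> f $ i = f' $ i" and "\<And>i. i \<le> n \<Longrightarrow> g $ i = g' $ i"
  shows "(f * g) $ n = (f' * g') $ n"
  using assms by (auto simp: fps_mult_nth intro!: sum.cong)

definition fps_unitriangular :: "('c::ab_group_add fps \<Rightarrow> 'c fps) \<Rightarrow> bool" where
  "fps_unitriangular P \<longleftrightarrow> additive P \<and> (\<forall>h s. (\<forall>i<s. h $ i = 0) \<longrightarrow> P h $ s = h $ s)"

lemma
  assumes "fps_unitriangular P"
  shows fps_unitriangular_additive: "additive P"
    and fps_unitriangular_nth: "(\<And>i. i < s \<Longrightarrow> h $ i = 0) \<Longrightarrow> P h $ s = h $ s"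
  using assms by (simp_all add: fps_unitriangular_def)

lemma fps_unitriangular_nth_cong:
  assumes "fps_unitriangular P" and agree: "\<And>i. i \<le> n \<Longrightarrow> f $ i = g $ i"
  shows "P f $ n = P g $ n"
proof -
  have "P (f - g) $ n = (f - g) $ n"
    by (rule fps_unitriangular_nth[OF assms(1)]) (simp add: agree)
  then show ?thesis
    using agree[of n] by (simp add: additive.diff[OF fps_unitriangular_additive[OF assms(1)]])
qed

lemma fps_unitriangular_bij:
  fixes P :: "'c::ring_1 fps \<Rightarrow> 'c fps"
  assumes "fps_unitriangular P"
  shows "bij P"
proof (rule bijI)
  interpret additive P
    by (rule fps_unitriangular_additive[OF assms])
  note leading = fps_unitriangular_nth[OF assms]
  show "inj P"
  proof (rule injI)
    fix f g assume "P f = P g"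
    then have "P (f - g) = 0"
      by (simp add: diff)
    moreover have "P (f - g) $ subdegree (f - g) = (f - g) $ subdegree (f - g)"
      by (rule leading) (rule nth_less_subdegree_zero)
    ultimately show "f = g"
      using nth_subdegree_zero_iff[of "f - g"] by simp
  qed
  show "surj P"
    unfolding surj_def
  proof
    fix g
    \<comment> \<open>Truncations of a preimage of g; step n corrects the n-th coefficient.\<close>
    define G where "G = rec_nat 0 (\<lambda>n Gn. Gn + fps_const (g $ n - P Gn $ n) * fps_X ^ n)"
    have G_Suc: "G (Suc n) = G n + fps_const (g $ n - P (G n) $ n) * fps_X ^ n" for n
      by (simp add: G_def)
    have G_stable: "G (n + d) $ i = G n $ i" if "i < n" for n d i
      using that by (induction d) (simp_all add: G_Suc)
    have P_G: "P (G n) $ i = g $ i" if "i < n" for n i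
      using that
    proof (induction n arbitrary: i)
      case (Suc n)
      define M where "M = fps_const (g $ n - P (G n) $ n) * fps_X ^ n"
      have "P (G (Suc n)) $ i = P (G n) $ i + P M $ i"
        by (simp add: G_Suc M_def add)
      also have "P M $ i = M $ i"
        using Suc.prems by (intro leading) (simp add: M_def)
      finally show ?case
        using Suc by (cases "i = n") (simp_all add: M_def)
    qed simp
    define f where "f = Abs_fps (\<lambda>n. G (Suc n) $ n)"
    have "P f $ n = g $ n" for n
    proof -
      have "f $ i = G (Suc n) $ i" if "i \<le> n" for i
        using G_stable[of i "Suc i" "n - i"] that by (simp add: f_def)
      then have "P f $ n = P (G (Suc n)) $ n"
        by (rule fps_unitriangular_nth_cong[OF assms])
      then show ?thesis
        using P_G[of n "Suc n"] by simp
    qed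
    then show "\<exists>f. g = P f"
      by (intro exI[of _ f]) (simp add: fps_eq_iff)
  qed
qed

lemma fps_nth_additive_expansion:
  fixes P :: "'c::comm_ring_1 fps \<Rightarrow> 'c fps"
  assumes "additive P" and shift: "\<And>n g. P (fps_X ^ n * g) = fps_X ^ n * P g"
  shows "P g $ j = (\<Sum>n\<le>j. P (fps_const (g $ n)) $ (j - n))"
proof -
  have cutoff: "fps_cutoff (Suc j) g = (\<Sum>n\<le>j. fps_X ^ n * fps_const (g $ n))"
  proof (rule fps_ext)
    fix i
    have "(\<Sum>n\<le>j. fps_X ^ n * fps_const (g $ n)) $ i = (\<Sum>n\<le>j. if i = n then g $ n else 0)"
      unfolding fps_sum_nth by (rule sum.cong) (auto simp: fps_X_power_mult_nth)
    then show "fps_cutoff (Suc j) g $ i = (\<Sum>n\<le>j. fps_X ^ n * fps_const (g $ n)) $ i"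
      by simp
  qed
  have "P g = P (fps_X ^ Suc j * fps_shift (Suc j) g + fps_cutoff (Suc j) g)"
    by (simp only: fps_shift_cutoff')
  also have "\<dots> = fps_X ^ Suc j * P (fps_shift (Suc j) g)
      + (\<Sum>n\<le>j. fps_X ^ n * P (fps_const (g $ n)))"
    by (simp only: cutoff additive.add[OF \<open>additive P\<close>] additive.sum[OF \<open>additive P\<close>] shift)
  finally show ?thesis
    by (simp add: fps_sum_nth fps_X_power_mult_nth del: power_Suc)
qed

lemma series_op_nth: "series_op A f $ n = (\<Sum>i\<le>n. A i (f $ (n - i)))"
  by (simp add: series_op_def)

lemma fps_scale_eq_series_op: "fps_scale sc c f = series_op (\<lambda>i. sc (c $ i)) f"
  by (simp add: fps_scale_def series_op_def)

lemma series_op_additive: "(\<And>i. additive (A i)) \<Longrightarrow> additive (series_op A)"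
  by standard (simp add: fps_eq_iff series_op_nth additive.add sum.distrib)

lemma series_op_nth_cutoff:
  fixes A :: "nat \<Rightarrow> 'c::comm_ring_1 \<Rightarrow> 'c"
  assumes "n \<le> N"
  shows "series_op A f $ n = (\<Sum>i\<le>N. fps_X ^ i * fps_map_coeff (A i) f) $ n"
proof -
  have "(\<Sum>i\<le>N. fps_X ^ i * fps_map_coeff (A i) f) $ n
      = (\<Sum>i\<le>N. if n < i then 0 else fps_map_coeff (A i) f $ (n - i))"
    by (simp add: fps_sum_nth fps_X_power_mult_nth)
  also have "\<dots> = (\<Sum>i\<le>n. A i (f $ (n - i)))"
    using assms by (intro sum.mono_neutral_cong_right) auto
  finally show ?thesis
    by (simp add: series_op_nth)
qed

lemma series_op_mult:
  fixes A :: "nat \<Rightarrow> 'c::comm_ring_1 \<Rightarrow> 'c"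
  assumes "\<And>i. additive (A i)" and leibniz: "\<And>i x y. A i (x * y) = A i x * y + x * A i y"
  shows "series_op A (f * g) = series_op A f * g + f * series_op A g"
proof (rule fps_ext)
  fix n
  let ?T = "\<lambda>f. \<Sum>i\<le>n. fps_X ^ i * fps_map_coeff (A i) f"
  have map_mult:
    "fps_map_coeff (A i) (f * g) = fps_map_coeff (A i) f * g + f * fps_map_coeff (A i) g" for i
    by (simp add: fps_eq_iff fps_mult_nth additive.sum[OF assms(1)] leibniz sum.distrib)
  have "?T (f * g)
      = (\<Sum>i\<le>n. fps_X ^ i * fps_map_coeff (A i) f * g + f * (fps_X ^ i * fps_map_coeff (A i) g))"
    by (rule sum.cong) (simp_all add: map_mult algebra_simps)
  also have "\<dots> = ?T f * g + f * ?T g"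
    by (simp add: sum.distrib sum_distrib_left sum_distrib_right)
  finally have "?T (f * g) = ?T f * g + f * ?T g" .
  moreover have "(?T f * g) $ n = (series_op A f * g) $ n"
    and "(f * ?T g) $ n = (f * series_op A g) $ n"
    by (intro fps_mult_nth_cong; simp add: series_op_nth_cutoff)+
  ultimately show "series_op A (f * g) $ n = (series_op A f * g + f * series_op A g) $ n"
    by (simp add: series_op_nth_cutoff[of n n])
qed

lemma series_op_commute:
  fixes P :: "'c::comm_ring_1 fps \<Rightarrow> 'c fps"
  assumes "additive P"
    and local: "\<And>f g n. (\<And>i. i \<le> n \<Longrightarrow> f $ i = g $ i) \<Longrightarrow> P f $ n = P g $ n"
    and shift: "\<And>n f. P (fps_X ^ n * f) = fps_X ^ n * P f"
    and commute: "\<And>i f. P (fps_map_coeff (A i) f) = fps_map_coeff (A i) (P f)"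
  shows "P (series_op A f) = series_op A (P f)"
proof (rule fps_ext)
  fix n
  let ?T = "\<lambda>f. \<Sum>i\<le>n. fps_X ^ i * fps_map_coeff (A i) f"
  have "P (series_op A f) $ n = P (?T f) $ n"
    by (rule local) (simp add: series_op_nth_cutoff)
  also have "P (?T f) = ?T (P f)"
    by (simp add: additive.sum[OF \<open>additive P\<close>] shift commute)
  finally show "P (series_op A f) $ n = series_op A (P f) $ n"
    by (simp add: series_op_nth_cutoff[of n n])
qed

section \<open>The exponential of a \<lambda>-series of derivations\<close>

locale lambda_derivation = module sb
  for sb :: "'k::field_char_0 \<Rightarrow> 'b::comm_ring_1 \<Rightarrow> 'b" +
  fixes X :: "nat \<Rightarrow> 'b \<Rightarrow> 'b"
  assumes der_series: "lambda_der_series sb X"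
begin

lemma X_0: "X 0 = (\<lambda>x. 0)"
  and X_additive: "additive (X i)"
  and X_scale: "X i (sb c x) = sb c (X i x)"
  and X_mult: "X i (x * y) = X i x * y + x * X i y"
  using der_series by (simp_all add: lambda_der_series_def kderivation_def additive_def)

lemma X_one: "X i 1 = 0"
  using X_mult[of i 1 1] by simp

lemma series_op_X_additive: "additive (series_op X)"
  by (rule series_op_additive[OF X_additive])

lemma series_op_X_mult: "series_op X (f * g) = series_op X f * g + f * series_op X g"
  by (rule series_op_mult[OF X_additive X_mult])

lemma series_op_fps_X_power: "series_op X (fps_X ^ n) = 0"
  by (auto simp: fps_eq_iff series_op_nth X_one additive.zero[OF X_additive] intro!: sum.neutral)

lemma series_op_map_scale:
  "series_op X (fps_map_coeff (sb c) f) = fps_map_coeff (sb c) (series_op X f)"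
  by (simp add: fps_eq_iff series_op_nth X_scale scale_sum_right)

lemma map_scale_map_scale:
  "fps_map_coeff (sb a) (fps_map_coeff (sb b) f) = fps_map_coeff (sb (a * b)) f"
  by (simp add: fps_eq_iff)

lemma map_scale_one [simp]: "fps_map_coeff (sb 1) f = f"
  by (simp add: fps_eq_iff)

lemma map_scale_of_nat: "fps_map_coeff (sb (of_nat n)) f = of_nat n * f"
  by (induction n) (simp_all add: fps_eq_iff fps_of_nat algebra_simps)

lemma series_op_vanishing:
  assumes "\<And>i. i < s \<Longrightarrow> f $ i = 0" and "i \<le> s"
  shows "series_op X f $ i = 0"
proof -
  have "X j (f $ (i - j)) = 0" if "j \<le> i" for j
    using assms that by (cases "j = 0") (simp_all add: X_0 additive.zero[OF X_additive])
  then show ?thesis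
    by (simp add: series_op_nth)
qed

lemma series_op_power_vanishing:
  assumes "\<And>i. i < s \<Longrightarrow> f $ i = 0" and "i < s + m"
  shows "(series_op X ^^ m) f $ i = 0"
  using assms(2)
proof (induction m arbitrary: i)
  case (Suc m)
  then show ?case
    using series_op_vanishing[of "s + m" "(series_op X ^^ m) f" i] by simp
qed (simp add: assms(1))

lemma series_op_power_add:
  "(series_op X ^^ m) (f + g) = (series_op X ^^ m) f + (series_op X ^^ m) g"
  by (induction m) (simp_all add: additive.add[OF series_op_X_additive])

definition exp_term :: "nat \<Rightarrow> 'b fps \<Rightarrow> 'b fps" where
  "exp_term m f = fps_map_coeff (sb (inverse (fact m))) ((series_op X ^^ m) f)"

lemma fps_exp_op_nth: "fps_exp_op sb X f $ n = (\<Sum>m\<le>n. exp_term m f $ n)"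
  by (simp add: fps_exp_op_def exp_term_def)

lemma exp_term_0 [simp]: "exp_term 0 f = f"
  by (simp add: exp_term_def fps_eq_iff)

lemma exp_term_vanishing:
  assumes "\<And>i. i < s \<Longrightarrow> f $ i = 0" and "i < s + m"
  shows "exp_term m f $ i = 0"
  using series_op_power_vanishing[OF assms] by (simp add: exp_term_def)

lemma exp_term_additive: "additive (exp_term m)"
  by standard (simp add: exp_term_def fps_eq_iff series_op_power_add scale_right_distrib)

lemma exp_term_map_scale:
  "exp_term m (fps_map_coeff (sb c) f) = fps_map_coeff (sb c) (exp_term m f)"
proof -
  have "(series_op X ^^ m) (fps_map_coeff (sb c) f) = fps_map_coeff (sb c) ((series_op X ^^ m) f)"
    by (induction m) (simp_all add: series_op_map_scale)
  then show ?thesis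
    by (simp add: exp_term_def map_scale_map_scale mult.commute)
qed

lemma series_op_exp_term: "series_op X (exp_term j f) = of_nat (Suc j) * exp_term (Suc j) f"
proof -
  have "of_nat (Suc j) * inverse (fact (Suc j) :: 'k) = inverse (fact j)"
    by (simp add: field_simps del: of_nat_Suc)
  then have "series_op X (exp_term j f)
      = fps_map_coeff (sb (of_nat (Suc j)))
          (fps_map_coeff (sb (inverse (fact (Suc j)))) ((series_op X ^^ Suc j) f))"
    by (simp only: exp_term_def series_op_map_scale map_scale_map_scale funpow.simps o_apply)
  then show ?thesis
    by (simp only: map_scale_of_nat exp_term_def)
qed

lemma exp_term_Suc:
  "exp_term (Suc m) f = fps_map_coeff (sb (inverse (of_nat (Suc m)))) (series_op X (exp_term m f))"
  by (simp add: series_op_exp_term map_scale_of_nat[symmetric] map_scale_map_scale del: of_nat_Suc)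

lemma exp_term_nth_below: "n < m \<Longrightarrow> exp_term m f $ n = 0"
  by (rule exp_term_vanishing[of 0]) simp_all

lemma exp_term_mult: "exp_term m (f * g) = (\<Sum>j\<le>m. exp_term j f * exp_term (m - j) g)"
proof (induction m)
  case (Suc m)
  define A where "A j = exp_term j f * exp_term (Suc m - j) g" for j
  have "series_op X (exp_term m (f * g))
      = (\<Sum>j\<le>m. series_op X (exp_term j f) * exp_term (m - j) g
          + exp_term j f * series_op X (exp_term (m - j) g))"
    by (simp add: Suc additive.sum[OF series_op_X_additive] series_op_X_mult)
  also have "\<dots> = (\<Sum>j\<le>m. of_nat (Suc j) * A (Suc j)) + (\<Sum>j\<le>m. of_nat (Suc m - j) * A j)"
    by (simp add: sum.distrib series_op_exp_term A_def Suc_diff_le algebra_simps del: of_nat_Suc)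
  also have "(\<Sum>j\<le>m. of_nat (Suc j) * A (Suc j)) = (\<Sum>j\<le>Suc m. of_nat j * A j)"
    by (subst sum.atMost_Suc_shift) simp
  also have "(\<Sum>j\<le>m. of_nat (Suc m - j) * A j) = (\<Sum>j\<le>Suc m. of_nat (Suc m - j) * A j)"
    by simp
  also have "(\<Sum>j\<le>Suc m. of_nat j * A j) + (\<Sum>j\<le>Suc m. of_nat (Suc m - j) * A j)
      = of_nat (Suc m) * (\<Sum>j\<le>Suc m. A j)"
    unfolding sum.distrib[symmetric] sum_distrib_left
    by (rule sum.cong) (auto simp: algebra_simps simp del: of_nat_Suc)
  finally show ?case
    by (simp add: exp_term_Suc A_def map_scale_of_nat[symmetric] map_scale_map_scale
        del: of_nat_Suc)
qed simp

lemma fps_exp_op_nth_cutoff: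
  assumes "n \<le> N"
  shows "fps_exp_op sb X f $ n = (\<Sum>m\<le>N. exp_term m f) $ n"
  unfolding fps_exp_op_nth fps_sum_nth
  using assms by (intro sum.mono_neutral_cong_left) (auto simp: exp_term_nth_below)

lemma fps_exp_op_additive: "additive (fps_exp_op sb X)"
  by standard (simp add: fps_eq_iff fps_exp_op_nth additive.add[OF exp_term_additive] sum.distrib)

lemma fps_exp_op_unitriangular: "fps_unitriangular (fps_exp_op sb X)"
  unfolding fps_unitriangular_def
proof (intro conjI allI impI fps_exp_op_additive)
  fix h :: "'b fps" and s
  assume "\<forall>i<s. h $ i = 0"
  then have "exp_term m h $ s = (if m = 0 then h $ s else 0)" for m
    by (cases m) (simp_all add: exp_term_vanishing[of s h])
  then show "fps_exp_op sb X h $ s = h $ s"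
    by (simp add: fps_exp_op_nth)
qed

lemma fps_exp_op_nth_0: "fps_exp_op sb X f $ 0 = f $ 0"
  by (rule fps_unitriangular_nth[OF fps_exp_op_unitriangular]) simp

lemma fps_exp_op_bij: "bij (fps_exp_op sb X)"
  by (rule fps_unitriangular_bij[OF fps_exp_op_unitriangular])

lemma fps_exp_op_nth_cong:
  "(\<And>i. i \<le> n \<Longrightarrow> f $ i = g $ i) \<Longrightarrow> fps_exp_op sb X f $ n = fps_exp_op sb X g $ n"
  by (rule fps_unitriangular_nth_cong[OF fps_exp_op_unitriangular])

lemma fps_exp_op_mult: "fps_exp_op sb X (f * g) = fps_exp_op sb X f * fps_exp_op sb X g"
proof (rule fps_ext)
  fix n
  define h where "h p q = (exp_term p f * exp_term q g) $ n" for p q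
  have h_zero: "h p q = 0" if "n < p + q" for p q
  proof -
    have "exp_term p f $ i * exp_term q g $ (n - i) = 0" if "i \<le> n" for i
      using \<open>n < p + q\<close> that by (cases "i < p") (simp_all add: exp_term_nth_below)
    then show ?thesis
      by (simp add: h_def fps_mult_nth)
  qed
  have "fps_exp_op sb X (f * g) $ n = (\<Sum>m\<le>n. \<Sum>j\<le>m. h j (m - j))"
    by (simp add: fps_exp_op_nth exp_term_mult fps_sum_nth h_def)
  also have "\<dots> = (\<Sum>(p, q)\<in>{(p, q). p + q \<le> n}. h p q)"
    by (rule sum.triangle_reindex_eq[symmetric])
  also have "\<dots> = (\<Sum>(p, q)\<in>{..n} \<times> {..n}. h p q)"
    by (rule sum.mono_neutral_cong_left) (auto intro!: h_zero)
  also have "\<dots> = ((\<Sum>p\<le>n. exp_term p f) * (\<Sum>q\<le>n. exp_term q g)) $ n"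
    by (simp add: sum.cartesian_product[symmetric] h_def sum_product fps_sum_nth)
  also have "\<dots> = (fps_exp_op sb X f * fps_exp_op sb X g) $ n"
    by (intro fps_mult_nth_cong) (simp_all add: fps_exp_op_nth_cutoff)
  finally show "fps_exp_op sb X (f * g) $ n = (fps_exp_op sb X f * fps_exp_op sb X g) $ n" .
qed

lemma fps_exp_op_fixed:
  assumes "series_op X g = 0"
  shows "fps_exp_op sb X g = g"
proof -
  have "(series_op X ^^ Suc m) g = 0" for m
    by (induction m) (simp_all add: assms additive.zero[OF series_op_X_additive])
  then have "exp_term m g $ n = (if m = 0 then g $ n else 0)" for m n
    by (cases m) (simp_all add: exp_term_def del: funpow.simps)
  then show ?thesis
    by (simp add: fps_eq_iff fps_exp_op_nth)
qed

lemma fps_exp_op_X_power_mult: "fps_exp_op sb X (fps_X ^ n * f) = fps_X ^ n * fps_exp_op sb X f"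
  by (simp add: fps_exp_op_mult fps_exp_op_fixed series_op_fps_X_power)

lemma fps_exp_op_map_scale:
  "fps_exp_op sb X (fps_map_coeff (sb c) f) = fps_map_coeff (sb c) (fps_exp_op sb X f)"
  by (simp add: fps_eq_iff fps_exp_op_nth exp_term_map_scale scale_sum_right)

lemma fps_exp_op_fps_scale:
  "fps_exp_op sb X (fps_scale sb c f) = fps_scale sb c (fps_exp_op sb X f)"
  unfolding fps_scale_eq_series_op
  by (rule series_op_commute[where A = "\<lambda>i. sb (c $ i)", OF fps_exp_op_additive fps_exp_op_nth_cong
        fps_exp_op_X_power_mult fps_exp_op_map_scale])

end

section \<open>Transport of Poisson brackets\<close>

lemma bij_inv_commute:
  assumes "bij f" and "\<And>x. f (g x) = h (f x)"
  shows "inv f (h x) = g (inv f x)"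
  using assms by (simp add: bij_inv_eq_iff[symmetric] bij_is_surj surj_f_inv_f)

lemma bij_inv_commute2:
  assumes "bij f" and "\<And>x y. f (g x y) = h (f x) (f y)"
  shows "inv f (h x y) = g (inv f x) (inv f y)"
  using assms by (simp add: bij_inv_eq_iff[symmetric] bij_is_surj surj_f_inv_f)

lemma additive_inv: "bij f \<Longrightarrow> additive f \<Longrightarrow> additive (inv f)"
  by standard (rule bij_inv_commute2, simp_all add: additive.add)

lemma
  assumes "poisson_bracket sc P"
  shows poisson_bracket_add_left: "P (x + x') y = P x y + P x' y"
    and poisson_bracket_add_right: "P x (y + y') = P x y + P x y'"
    and poisson_bracket_scale_left: "P (sc c x) y = sc c (P x y)"
    and poisson_bracket_scale_right: "P x (sc c y) = sc c (P x y)"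
    and poisson_bracket_antisym: "P x y = - P y x"
    and poisson_bracket_jacobi: "P x (P y z) + P y (P z x) + P z (P x y) = 0"
    and poisson_bracket_leibniz: "P x (y * z) = P x y * z + y * P x z"
  using assms unfolding poisson_bracket_def bilinear_wrt_def by blast+

lemma poisson_bracket_additive_right: "poisson_bracket sc P \<Longrightarrow> additive (P x)"
  by standard (rule poisson_bracket_add_right)

lemma poisson_bracket_leibniz_left:
  assumes "poisson_bracket sc P"
  shows "P (x * y) z = x * P y z + P x z * y"
  using poisson_bracket_antisym[OF assms, of "x * y" z] poisson_bracket_antisym[OF assms, of x z]
    poisson_bracket_antisym[OF assms, of y z]
  by (simp add: poisson_bracket_leibniz[OF assms] algebra_simps)

lemma poisson_bracket_fps_X_power_right:
  assumes "poisson_bracket (fps_scale sc) P" and "module sc"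
  shows "P f (fps_X ^ n * g) = fps_X ^ n * P f g"
proof -
  have "fps_scale sc (fps_X ^ n) h = fps_X ^ n * h" for h
    using \<open>module sc\<close>
    by (simp add: fps_eq_iff fps_scale_def fps_X_power_mult_nth if_distrib[of "\<lambda>c. sc c _"]
        module.scale_zero_left module.scale_one sum.If_cases)
  then show ?thesis
    using poisson_bracket_scale_right[OF assms(1), of f "fps_X ^ n" g] by simp
qed

lemma poisson_bracket_transport:
  fixes \<Phi> :: "'c::comm_ring \<Rightarrow> 'c"
  assumes P: "poisson_bracket sc P" and "bij \<Phi>" and "additive \<Phi>"
    and mult: "\<And>x y. \<Phi> (x * y) = \<Phi> x * \<Phi> y" and scale: "\<And>c x. \<Phi> (sc c x) = sc c (\<Phi> x)"
  shows "poisson_bracket sc (\<lambda>x y. inv \<Phi> (P (\<Phi> x) (\<Phi> y)))"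
proof -
  interpret \<Phi>: additive \<Phi> by fact
  interpret \<Psi>: additive "inv \<Phi>"
    using additive_inv assms by blast
  have \<Psi>_mult: "inv \<Phi> (x * y) = inv \<Phi> x * inv \<Phi> y" for x y
    using bij_inv_commute2[OF \<open>bij \<Phi>\<close>, of times times] mult by blast
  have \<Psi>_scale: "inv \<Phi> (sc c x) = sc c (inv \<Phi> x)" for c x
    using bij_inv_commute[OF \<open>bij \<Phi>\<close>, of "sc c" "sc c"] scale by blast
  have \<Phi>_\<Psi>: "\<Phi> (inv \<Phi> x) = x" and \<Psi>_\<Phi>: "inv \<Phi> (\<Phi> x) = x" for x
    using \<open>bij \<Phi>\<close> by (simp_all add: bij_is_surj surj_f_inv_f bij_is_inj)
  have antisym: "inv \<Phi> (P (\<Phi> x) (\<Phi> y)) = - inv \<Phi> (P (\<Phi> y) (\<Phi> x))" for x y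
    using poisson_bracket_antisym[OF P, of "\<Phi> x" "\<Phi> y"] by (simp add: \<Psi>.minus)
  have jacobi: "inv \<Phi> (P x (P y z)) + inv \<Phi> (P y (P z x)) + inv \<Phi> (P z (P x y)) = 0" for x y z
    using poisson_bracket_jacobi[OF P, of x y z] by (simp add: \<Psi>.add[symmetric] \<Psi>.zero)
  show ?thesis
    unfolding poisson_bracket_def bilinear_wrt_def
    by (intro conjI allI antisym)
      (simp_all add: jacobi \<Phi>_\<Psi> \<Psi>_\<Phi> \<Phi>.add mult scale \<Psi>.add \<Psi>_mult \<Psi>_scale
        poisson_bracket_add_left[OF P] poisson_bracket_add_right[OF P]
        poisson_bracket_scale_left[OF P] poisson_bracket_scale_right[OF P]
        poisson_bracket_leibniz[OF P])
qed

lemma formal_poisson_deformation_transport: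
  fixes \<Phi> :: "'c::comm_ring_1 fps \<Rightarrow> 'c fps"
  assumes "formal_poisson_deformation sc P0 P" and "bij \<Phi>" and "additive \<Phi>"
    and "\<And>f g. \<Phi> (f * g) = \<Phi> f * \<Phi> g" and "\<And>c f. \<Phi> (fps_scale sc c f) = fps_scale sc c (\<Phi> f)"
    and nth_0: "\<And>f. \<Phi> f $ 0 = f $ 0"
  shows "formal_poisson_deformation sc P0 (\<lambda>f g. inv \<Phi> (P (\<Phi> f) (\<Phi> g)))"
proof -
  have P: "poisson_bracket (fps_scale sc) P" and P_nth_0: "\<And>f g. P f g $ 0 = P0 (f $ 0) (g $ 0)"
    using assms(1) by (simp_all add: formal_poisson_deformation_def)
  have \<Psi>_nth_0: "inv \<Phi> h $ 0 = h $ 0" for h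
    using nth_0[of "inv \<Phi> h"] \<open>bij \<Phi>\<close> by (simp add: bij_is_surj surj_f_inv_f)
  have "poisson_bracket (fps_scale sc) (\<lambda>f g. inv \<Phi> (P (\<Phi> f) (\<Phi> g)))"
    using assms(2-5) by (rule poisson_bracket_transport[OF P])
  moreover have "inv \<Phi> (P (\<Phi> f) (\<Phi> g)) $ 0 = P0 (f $ 0) (g $ 0)" for f g
    by (simp add: \<Psi>_nth_0 P_nth_0 nth_0)
  ultimately show ?thesis
    by (simp add: formal_poisson_deformation_def)
qed

section \<open>The first-order deviation is a Chevalley--Eilenberg cocycle\<close>

locale poisson_deviation =
  fixes sa :: "'k::field \<Rightarrow> 'a::comm_ring_1 \<Rightarrow> 'a" and sb :: "'k \<Rightarrow> 'b::comm_ring_1 \<Rightarrow> 'b"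
    and \<pi>0 :: "'a \<Rightarrow> 'a \<Rightarrow> 'a" and \<sigma>0 :: "'b \<Rightarrow> 'b \<Rightarrow> 'b" and \<phi>0 :: "'a \<Rightarrow> 'b"
    and \<pi> :: "'a fps \<Rightarrow> 'a fps \<Rightarrow> 'a fps" and \<sigma> :: "'b fps \<Rightarrow> 'b fps \<Rightarrow> 'b fps"
    and R :: "'a \<Rightarrow> 'a \<Rightarrow> 'b" and K :: nat
  assumes module_A: "module sa" and module_B: "module sb"
    and \<phi>0_additive: "additive \<phi>0" and \<phi>0_mult: "\<phi>0 (x * y) = \<phi>0 x * \<phi>0 y"
    and deformation_A: "formal_poisson_deformation sa \<pi>0 \<pi>"
    and deformation_B: "formal_poisson_deformation sb \<sigma>0 \<sigma>"
    and R_bilinear: "bilinear_wrt sa sb R"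
    and K_pos: "0 < K"
    and deviation: "n \<le> K \<Longrightarrow>
      (\<sigma> (fps_const (\<phi>0 a)) (fps_const (\<phi>0 b))
        - fps_map_coeff \<phi>0 (\<pi> (fps_const a) (fps_const b))) $ n
      = (if n = K then R a b else 0)"
begin

abbreviation lift :: "'a \<Rightarrow> 'b fps" where
  "lift a \<equiv> fps_const (\<phi>0 a)"

lemma \<pi>_bracket: "poisson_bracket (fps_scale sa) \<pi>"
  and \<pi>_nth_0: "\<pi> f g $ 0 = \<pi>0 (f $ 0) (g $ 0)"
  and \<sigma>_bracket: "poisson_bracket (fps_scale sb) \<sigma>"
  and \<sigma>_nth_0: "\<sigma> f' g' $ 0 = \<sigma>0 (f' $ 0) (g' $ 0)"
  using deformation_A deformation_B by (simp_all add: formal_poisson_deformation_def)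

lemma \<pi>0_antisym: "\<pi>0 x y = - \<pi>0 y x"
  using \<pi>_nth_0[of "fps_const x" "fps_const y"] \<pi>_nth_0[of "fps_const y" "fps_const x"]
  by (simp add: poisson_bracket_antisym[OF \<pi>_bracket, of "fps_const x"])

lemma \<sigma>0_minus_right: "\<sigma>0 x (- y) = - \<sigma>0 x y"
  using \<sigma>_nth_0[of "fps_const x" "fps_const (- y)"] \<sigma>_nth_0[of "fps_const x" "fps_const y"]
  by (simp add: additive.minus[OF poisson_bracket_additive_right[OF \<sigma>_bracket]]
      fps_const_neg[symmetric] del: fps_const_neg)

lemma R_minus_right: "R x (- y) = - R x y"
proof -
  have "additive (R x)"
    using R_bilinear by (simp add: additive_def bilinear_wrt_def)
  then show ?thesis
    by (rule additive.minus)
qed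

lemma deviation_below:
  "n < K \<Longrightarrow> \<sigma> (lift a) (lift b) $ n = \<phi>0 (\<pi> (fps_const a) (fps_const b) $ n)"
  using deviation[of n a b] by simp

lemma deviation_top:
  "\<sigma> (lift a) (lift b) $ K = \<phi>0 (\<pi> (fps_const a) (fps_const b) $ K) + R a b"
  using deviation[of K a b] by (simp add: algebra_simps)

lemma R_antisym: "R a b = - R b a"
  using deviation_top[of a b] deviation_top[of b a]
  by (simp add: poisson_bracket_antisym[OF \<sigma>_bracket, of "lift a"]
      poisson_bracket_antisym[OF \<pi>_bracket, of "fps_const a"] additive.minus[OF \<phi>0_additive])

lemma R_mult_left: "R (a * a') b = \<phi>0 a * R a' b + R a b * \<phi>0 a'"
proof -
  have "\<sigma> (lift (a * a')) (lift b) = lift a * \<sigma> (lift a') (lift b) + \<sigma> (lift a) (lift b) * lift a'"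
    by (simp add: \<phi>0_mult poisson_bracket_leibniz_left[OF \<sigma>_bracket, symmetric])
  moreover have "\<pi> (fps_const (a * a')) (fps_const b)
      = fps_const a * \<pi> (fps_const a') (fps_const b) + \<pi> (fps_const a) (fps_const b) * fps_const a'"
    by (simp add: poisson_bracket_leibniz_left[OF \<pi>_bracket, symmetric])
  ultimately show ?thesis
    using deviation_top[of "a * a'" b] deviation_top[of a' b] deviation_top[of a b]
    by (simp add: \<phi>0_mult additive.add[OF \<phi>0_additive] algebra_simps)
qed

lemma R_mult_right: "R b (a * a') = \<phi>0 a * R b a' + R b a * \<phi>0 a'"
  using R_mult_left[of a a' b] R_antisym[of b] by (simp add: algebra_simps)

lemma CE_der_2cochain: "CE_der_2cochain sa sb \<phi>0 R"
  unfolding CE_der_2cochain_def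
  using R_bilinear R_antisym R_mult_left R_mult_right by blast

lemma nested_bracket_term:
  assumes "n \<le> K"
  shows "\<sigma> (lift a) (fps_const (\<sigma> (lift b) (lift d) $ n)) $ (K - n)
    = \<phi>0 (\<pi> (fps_const a) (fps_const (\<pi> (fps_const b) (fps_const d) $ n)) $ (K - n))
      + (if n = 0 then R a (\<pi>0 b d) else 0) + (if n = K then \<sigma>0 (\<phi>0 a) (R b d) else 0)"
proof (cases "n < K")
  case True
  then have "\<sigma> (lift b) (lift d) $ n = \<phi>0 (\<pi> (fps_const b) (fps_const d) $ n)"
    by (rule deviation_below)
  with True K_pos show ?thesis
    by (cases "n = 0") (simp_all add: deviation_top deviation_below \<pi>_nth_0)
next
  case False
  with assms have "n = K"
    by simp
  have "fps_const (\<sigma> (lift b) (lift d) $ K)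
      = fps_const (\<phi>0 (\<pi> (fps_const b) (fps_const d) $ K)) + fps_const (R b d)"
    by (simp add: deviation_top)
  with \<open>n = K\<close> K_pos show ?thesis
    by (simp add: poisson_bracket_add_right[OF \<sigma>_bracket] deviation_below
        \<sigma>_nth_0[of _ "fps_const (R b d)"] del: fps_const_add)
qed

lemma nested_bracket_nth:
  "\<sigma> (lift a) (\<sigma> (lift b) (lift d)) $ K
    = \<phi>0 (\<pi> (fps_const a) (\<pi> (fps_const b) (fps_const d)) $ K) + R a (\<pi>0 b d) + \<sigma>0 (\<phi>0 a) (R b d)"
proof -
  let ?\<pi>_term = "\<lambda>n. \<pi> (fps_const a) (fps_const (\<pi> (fps_const b) (fps_const d) $ n)) $ (K - n)"
  have "\<sigma> (lift a) (\<sigma> (lift b) (lift d)) $ K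
      = (\<Sum>n\<le>K. \<sigma> (lift a) (fps_const (\<sigma> (lift b) (lift d) $ n)) $ (K - n))"
    by (rule fps_nth_additive_expansion[OF poisson_bracket_additive_right[OF \<sigma>_bracket]
          poisson_bracket_fps_X_power_right[OF \<sigma>_bracket module_B]])
  also have "\<dots> = (\<Sum>n\<le>K. \<phi>0 (?\<pi>_term n)
      + (if n = 0 then R a (\<pi>0 b d) else 0) + (if n = K then \<sigma>0 (\<phi>0 a) (R b d) else 0))"
    by (rule sum.cong) (simp_all add: nested_bracket_term)
  also have "\<dots> = \<phi>0 (\<Sum>n\<le>K. ?\<pi>_term n) + R a (\<pi>0 b d) + \<sigma>0 (\<phi>0 a) (R b d)"
    by (simp add: sum.distrib additive.sum[OF \<phi>0_additive])
  also have "(\<Sum>n\<le>K. ?\<pi>_term n) = \<pi> (fps_const a) (\<pi> (fps_const b) (fps_const d)) $ K"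
    by (rule fps_nth_additive_expansion[symmetric, OF poisson_bracket_additive_right[OF \<pi>_bracket]
          poisson_bracket_fps_X_power_right[OF \<pi>_bracket module_A]])
  finally show ?thesis .
qed

lemma R_jacobi:
  "R a0 (\<pi>0 a1 a2) + \<sigma>0 (\<phi>0 a0) (R a1 a2) + R a1 (\<pi>0 a2 a0) + \<sigma>0 (\<phi>0 a1) (R a2 a0)
    + R a2 (\<pi>0 a0 a1) + \<sigma>0 (\<phi>0 a2) (R a0 a1) = 0"
proof -
  let ?A = "fps_const a0" and ?B = "fps_const a1" and ?C = "fps_const a2"
  have "0 = (\<sigma> (lift a0) (\<sigma> (lift a1) (lift a2)) + \<sigma> (lift a1) (\<sigma> (lift a2) (lift a0))
      + \<sigma> (lift a2) (\<sigma> (lift a0) (lift a1))) $ K"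
    by (simp add: poisson_bracket_jacobi[OF \<sigma>_bracket])
  also have "\<dots> = \<phi>0 ((\<pi> ?A (\<pi> ?B ?C) + \<pi> ?B (\<pi> ?C ?A) + \<pi> ?C (\<pi> ?A ?B)) $ K)
      + (R a0 (\<pi>0 a1 a2) + \<sigma>0 (\<phi>0 a0) (R a1 a2) + R a1 (\<pi>0 a2 a0) + \<sigma>0 (\<phi>0 a1) (R a2 a0)
        + R a2 (\<pi>0 a0 a1) + \<sigma>0 (\<phi>0 a2) (R a0 a1))"
    by (simp add: nested_bracket_nth additive.add[OF \<phi>0_additive] algebra_simps)
  also have "\<pi> ?A (\<pi> ?B ?C) + \<pi> ?B (\<pi> ?C ?A) + \<pi> ?C (\<pi> ?A ?B) = 0"
    by (rule poisson_bracket_jacobi[OF \<pi>_bracket])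
  finally show ?thesis
    by (simp add: additive.zero[OF \<phi>0_additive])
qed

lemma CE_cocycle: "CE_delta2 \<pi>0 \<sigma>0 \<phi>0 R a0 a1 a2 = 0"
proof -
  have "\<sigma>0 (\<phi>0 a1) (R a0 a2) = - \<sigma>0 (\<phi>0 a1) (R a2 a0)"
    by (simp add: R_antisym[of a0 a2] \<sigma>0_minus_right)
  moreover have "R (\<pi>0 a0 a2) a1 = R a1 (\<pi>0 a2 a0)"
    by (subst R_antisym) (simp add: \<pi>0_antisym[of a0 a2] R_minus_right)
  moreover have "R (\<pi>0 a0 a1) a2 = - R a2 (\<pi>0 a0 a1)" and "R (\<pi>0 a1 a2) a0 = - R a0 (\<pi>0 a1 a2)"
    by (rule R_antisym)+
  ultimately have "CE_delta2 \<pi>0 \<sigma>0 \<phi>0 R a0 a1 a2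
      = R a0 (\<pi>0 a1 a2) + \<sigma>0 (\<phi>0 a0) (R a1 a2) + R a1 (\<pi>0 a2 a0) + \<sigma>0 (\<phi>0 a1) (R a2 a0)
        + R a2 (\<pi>0 a0 a1) + \<sigma>0 (\<phi>0 a2) (R a0 a1)"
    unfolding CE_delta2_def by (simp only:) (simp add: algebra_simps)
  then show ?thesis
    by (simp only: R_jacobi)
qed

end

theorem lemma3p5:
  fixes sa :: "'k::field_char_0 \<Rightarrow> 'a::comm_ring_1 \<Rightarrow> 'a"
    and sb :: "'k \<Rightarrow> 'b::comm_ring_1 \<Rightarrow> 'b"
    and \<pi>0 :: "'a \<Rightarrow> 'a \<Rightarrow> 'a" and \<sigma>0 :: "'b \<Rightarrow> 'b \<Rightarrow> 'b"
    and \<phi>0 :: "'a \<Rightarrow> 'b"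
    and \<pi> :: "'a fps \<Rightarrow> 'a fps \<Rightarrow> 'a fps" and \<sigma> :: "'b fps \<Rightarrow> 'b fps \<Rightarrow> 'b fps"
    and X :: "nat \<Rightarrow> 'b \<Rightarrow> 'b" and k :: nat
    and R :: "'a \<Rightarrow> 'a \<Rightarrow> 'b"
  assumes alg_A: "kalgebra sa" and alg_B: "kalgebra sb"
    and pois_A: "poisson_bracket sa \<pi>0" and pois_B: "poisson_bracket sb \<sigma>0"
    and morph: "poisson_morphism sa sb \<pi>0 \<sigma>0 \<phi>0"
    and def_\<pi>: "formal_poisson_deformation sa \<pi>0 \<pi>"
    and def_\<sigma>: "formal_poisson_deformation sb \<sigma>0 \<sigma>"
    and X_der: "lambda_der_series sb X"
    and R_bil: "bilinear_wrt sa sb R"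
    and hyp: "\<forall>a1 a2. \<forall>n\<le>k + 1.
       fps_nth (inv (fps_exp_op sb X)
          (\<sigma> (fps_exp_op sb X (fps_const (\<phi>0 a1))) (fps_exp_op sb X (fps_const (\<phi>0 a2))))
        - fps_map_coeff \<phi>0 (\<pi> (fps_const a1) (fps_const a2))) n
       = (if n = k + 1 then R a1 a2 else 0)"
  shows "CE_der_2cochain sa sb \<phi>0 R \<and> (\<forall>a0 a1 a2. CE_delta2 \<pi>0 \<sigma>0 \<phi>0 R a0 a1 a2 = 0)"
proof -
  have module_A: "module sa" and module_B: "module sb"
    using alg_A alg_B by (simp_all add: kalgebra_def)
  interpret lambda_derivation sb X
    using module_B X_der by (simp add: lambda_derivation_def lambda_derivation_axioms_def)
  let ?\<Phi> = "fps_exp_op sb X"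
  have deformation_gauged: "formal_poisson_deformation sb \<sigma>0 (\<lambda>f g. inv ?\<Phi> (\<sigma> (?\<Phi> f) (?\<Phi> g)))"
    by (rule formal_poisson_deformation_transport[OF def_\<sigma> fps_exp_op_bij fps_exp_op_additive
          fps_exp_op_mult fps_exp_op_fps_scale fps_exp_op_nth_0])
  have \<phi>0_additive: "additive \<phi>0" and \<phi>0_mult: "\<And>x y. \<phi>0 (x * y) = \<phi>0 x * \<phi>0 y"
    using morph by (simp_all add: poisson_morphism_def additive_def)
  interpret poisson_deviation sa sb \<pi>0 \<sigma>0 \<phi>0 \<pi> "\<lambda>f g. inv ?\<Phi> (\<sigma> (?\<Phi> f) (?\<Phi> g))" R "k + 1"
    by (rule poisson_deviation.intro)
      (use module_A module_B \<phi>0_additive \<phi>0_mult def_\<pi> deformation_gauged R_bil hyp in simp_all)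
  show ?thesis
    using CE_der_2cochain CE_cocycle by blast
qed

end
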